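(* Let $\delta_1=b-d>0$, $\delta_2=c-a>0$, $\delta=\delta_1+\delta_2$, $s^*=\delta_1/\delta$, $\gamma=s^*(1-s^* )$, let $p\in[0,1]$ and $\tau\ge 0$, and consider the replicator dynamics with discrete delays $$\frac{ds(t)}{dt}=s(t)(1-s(t))\big(- p\, \delta\, s(t-\tau)-(1-p)\, \delta\, s(t)+\delta_1\big).$$ Then: (i) if $p\le 0.5$, the mixed equilibrium $s^*$ is (locally) asymptotically stable for every value of $\tau\ge 0$; (ii) if $p>0.5$, a Hopf bifurcation of the equilibrium $s^*$ occurs at $\tau=\tau_{cr}$, where $$\tau_{cr}=\frac{\arccos\!\big(-\frac{1-p}{p}\big)}{\delta\gamma \sqrt{2p-1}},$$ with $\arccos$ taking values in $[0,\pi]$.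
   Context: Two-strategy evolutionary game with payoff matrix $\begin{pmatrix} a&b\\ c&d\end{pmatrix}$; $s(t)\in[0,1]$ is the fraction of the population playing strategy $A$; a strategy's payoff is felt with delay $\tau$ with probability $p$ and without delay with probability $1-p$. The linearization at $s^*$ (with $x=s-s^*$) is $\dot x(t)=-(1-p)\delta\gamma x(t)-p\delta\gamma x(t-\tau)$, with characteristic equation $\lambda+(1-p)\delta\gamma+p\delta\gamma e^{-\lambda\tau}=0$. Asymptotic stability means all characteristic roots have negative real part; a Hopf bifurcation at $\tau_{cr}$ means a pair of characteristic roots $\pm i w_0$, $w_0>0$, lies on the imaginary axis at $\tau=\tau_{cr}$ and crosses it transversally into the right half-plane as $\tau$ increases. *)

theory Defs
  imports "HOL-Analysis.Analysis"
begin

text \<open>Characteristic function of the linearization at the mixed equilibrium: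
  z + (1-p) delta gamma + p delta gamma exp(-lambda tau).\<close>
definition char_fun :: "real \<Rightarrow> real \<Rightarrow> real \<Rightarrow> real \<Rightarrow> complex \<Rightarrow> complex" where
  "char_fun \<delta> \<gamma> p \<tau> z =
     z + complex_of_real ((1 - p) * \<delta> * \<gamma>)
       + complex_of_real (p * \<delta> * \<gamma>) * exp (- z * complex_of_real \<tau>)"

definition asympt_stable :: "real \<Rightarrow> real \<Rightarrow> real \<Rightarrow> real \<Rightarrow> bool" where
  "asympt_stable \<delta> \<gamma> p \<tau> \<longleftrightarrow> (\<forall>z. char_fun \<delta> \<gamma> p \<tau> z = 0 \<longrightarrow> Re z < 0)"

definition hopf_bifurcation_at :: "real \<Rightarrow> real \<Rightarrow> real \<Rightarrow> real \<Rightarrow> bool" where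
  "hopf_bifurcation_at \<delta> \<gamma> p \<tau>cr \<longleftrightarrow>
     (\<exists>w0 > 0.
        char_fun \<delta> \<gamma> p \<tau>cr (\<i> * complex_of_real w0) = 0 \<and>
        char_fun \<delta> \<gamma> p \<tau>cr (- \<i> * complex_of_real w0) = 0 \<and>
        (\<exists>L :: real \<Rightarrow> complex. \<exists>L' e. e > 0 \<and>
           (\<forall>\<tau>. \<bar>\<tau> - \<tau>cr\<bar> < e \<longrightarrow> char_fun \<delta> \<gamma> p \<tau> (L \<tau>) = 0) \<and>
           L \<tau>cr = \<i> * complex_of_real w0 \<and>
           (L has_vector_derivative L') (at \<tau>cr) \<and>
           Re L' > 0))"

end

theory Submission
  imports Defs "HOL-Complex_Analysis.Complex_Analysis"
begin

text \<open>Write the characteristic equation as \<open>z + a + b exp (- z \<tau>) = 0\<close> with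
  \<open>a = (1 - p) \<delta> \<gamma>\<close> and \<open>b = p \<delta> \<gamma>\<close>.
  If \<open>b \<le> a\<close>, a root with \<open>Re z \<ge> 0\<close> would give
  \<open>|z + a| = b exp (- \<tau> Re z) \<le> b \<le> a \<le> |z + a|\<close>, forcing \<open>z = 0\<close>, which is not a root.
  If \<open>b > a\<close>, a root \<open>i w\<close> requires \<open>cos (w \<tau>) = - a / b\<close> and \<open>sin (w \<tau>) = w / b\<close>, whence
  \<open>w = sqrt (b\<^sup>2 - a\<^sup>2)\<close> and the critical delay. The substitution \<open>y = (z + a) \<tau>\<close> turns the
  equation into \<open>y exp y = - b \<tau> exp (a \<tau>)\<close>, so a holomorphic local inverse of \<open>y \<mapsto> y exp y\<close>
  yields a differentiable branch of roots through \<open>i w\<close>; its velocity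
  \<open>- z (z + a) / (1 + (z + a) \<tau>)\<close> has real part \<open>w\<^sup>2 / |1 + (i w + a) \<tau>|\<^sup>2 > 0\<close> there.\<close>

lemma delay_char_root_Re_neg:
  fixes a b \<tau> :: real and z :: complex
  assumes "0 \<le> b" "b \<le> a" "0 < a" "0 \<le> \<tau>"
    and root: "z + of_real a + of_real b * exp (- z * of_real \<tau>) = 0"
  shows "Re z < 0"
proof (rule ccontr)
  assume "\<not> Re z < 0"
  then have Re_nonneg: "0 \<le> Re z" by simp
  have "cmod (z + of_real a) = cmod (of_real b * exp (- z * of_real \<tau>))"
    using root by (metis add_eq_0_iff norm_minus_cancel)
  also have "\<dots> = b * exp (- Re z * \<tau>)"
    using \<open>0 \<le> b\<close> by (simp add: norm_mult)
  also have "\<dots> \<le> b"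
    using Re_nonneg \<open>0 \<le> \<tau>\<close> \<open>0 \<le> b\<close> by (simp add: mult_left_le)
  finally have "cmod (z + of_real a) \<le> a" using \<open>b \<le> a\<close> by linarith
  moreover have "Re z + a \<le> cmod (z + of_real a)"
    using complex_Re_le_cmod[of "z + of_real a"] by simp
  ultimately have "Re z = 0" "cmod (z + of_real a) = a" using Re_nonneg by linarith+
  then have "z = 0"
    using cmod_power2[of "z + of_real a"] by (simp add: complex_eq_iff)
  with root \<open>0 \<le> b\<close> \<open>0 < a\<close> show False
    by (simp add: complex_eq_iff)
qed

lemma imaginary_delay_char_roots:
  fixes a b :: real
  assumes "\<bar>a\<bar> < b"
  defines "w \<equiv> sqrt (b\<^sup>2 - a\<^sup>2)"
  defines "\<tau> \<equiv> arccos (- a / b) / w"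
  shows "0 < w" and "0 < \<tau>"
    and "\<i> * of_real w + of_real a + of_real b * exp (- (\<i> * of_real w) * of_real \<tau>) = 0"
    and "- \<i> * of_real w + of_real a + of_real b * exp (- (- \<i> * of_real w) * of_real \<tau>) = 0"
proof -
  have b: "0 < b" using assms(1) by linarith
  have "\<bar>a\<bar>\<^sup>2 < b\<^sup>2" using assms(1) by (intro power_strict_mono) auto
  then have "a\<^sup>2 < b\<^sup>2" by simp
  then show w: "0 < w" by (simp add: w_def)
  have x: "-1 < - a / b" "- a / b < 1" using assms(1) b by (auto simp: field_simps abs_less_iff)
  have w\<tau>: "w * \<tau> = arccos (- a / b)" using w by (simp add: \<tau>_def)
  show "0 < \<tau>" using arccos_lt_bounded[OF x] w by (simp add: \<tau>_def)
  have cos: "b * cos (w * \<tau>) = - a" using x b by (simp add: w\<tau>)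
  have "1 - (- a / b)\<^sup>2 = (w / b)\<^sup>2"
    using b \<open>a\<^sup>2 < b\<^sup>2\<close> by (simp add: w_def power_divide field_simps)
  then have "b * sin (w * \<tau>) = w"
    using x b w sin_arccos[of "- a / b"] by (simp add: w\<tau>)
  with cos show "\<i> * of_real w + of_real a + of_real b * exp (- (\<i> * of_real w) * of_real \<tau>) = 0"
    and "- \<i> * of_real w + of_real a + of_real b * exp (- (- \<i> * of_real w) * of_real \<tau>) = 0"
    by (simp_all add: complex_eq_iff Re_exp Im_exp)
qed

lemma holomorphic_local_inverse:
  assumes holf: "f holomorphic_on S" and "open S" "z0 \<in> S" and "deriv f z0 \<noteq> 0"
  obtains V g where "open V" "f z0 \<in> V" "g (f z0) = z0" "\<And>v. v \<in> V \<Longrightarrow> f (g v) = v"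
    "(g has_field_derivative inverse (deriv f z0)) (at (f z0))"
proof -
  obtain r where r: "0 < r" "ball z0 r \<subseteq> S" "open (f ` ball z0 r)" "inj_on f (ball z0 r)"
    using has_complex_derivative_locally_invertible[OF holf \<open>z0 \<in> S\<close> \<open>open S\<close>] assms(4) by blast
  obtain g where g: "g holomorphic_on f ` ball z0 r"
      "\<And>z. z \<in> ball z0 r \<Longrightarrow> deriv f z * deriv g (f z) = 1"
      "\<And>z. z \<in> ball z0 r \<Longrightarrow> g (f z) = z"
    using holomorphic_has_inverse[OF holomorphic_on_subset[OF holf r(2)] open_ball r(4)] by blast
  have z0: "z0 \<in> ball z0 r" using r by simp
  have "g field_differentiable at (f z0)"
    using g(1) r(3) z0 holomorphic_on_imp_differentiable_at by blast
  moreover have "deriv g (f z0) = inverse (deriv f z0)"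
    using g(2)[OF z0] by (metis inverse_unique mult.commute)
  ultimately have "(g has_field_derivative inverse (deriv f z0)) (at (f z0))"
    by (metis DERIV_deriv_iff_field_differentiable)
  with r z0 g(3) show ?thesis by (intro that[of "f ` ball z0 r" g]) auto
qed

lemma delay_char_eq_zero_iff_Lambert_form:
  fixes a b z t :: complex
  assumes "t \<noteq> 0"
  shows "z + a + b * exp (- z * t) = 0 \<longleftrightarrow> (z + a) * t * exp ((z + a) * t) = - (b * t * exp (a * t))"
proof -
  have "exp (- z * t) * exp (z * t) = 1" by (simp flip: exp_add)
  then have "z + a + b * exp (- z * t) = exp (- z * t) * ((z + a) * exp (z * t) + b)"
    by (simp add: algebra_simps)
  moreover have "(z + a) * t * exp ((z + a) * t) + b * t * exp (a * t)
      = t * exp (a * t) * ((z + a) * exp (z * t) + b)"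
    by (simp add: distrib_right exp_add algebra_simps)
  ultimately have "z + a + b * exp (- z * t) = 0
      \<longleftrightarrow> (z + a) * t * exp ((z + a) * t) + b * t * exp (a * t) = 0"
    using assms by simp
  then show ?thesis by (simp add: eq_neg_iff_add_eq_0)
qed

lemma Lambert_branch_has_derivative:
  fixes a b z0 \<tau>0 :: complex
  defines "y0 \<equiv> (z0 + a) * \<tau>0"
  assumes "\<tau>0 \<noteq> 0" "1 + y0 \<noteq> 0" and y0: "y0 * exp y0 = - (b * \<tau>0 * exp (a * \<tau>0))"
    and gy0: "g (y0 * exp y0) = y0"
    and dg: "(g has_field_derivative inverse ((1 + y0) * exp y0)) (at (y0 * exp y0))"
  shows "((\<lambda>\<tau>. g (- (b * \<tau> * exp (a * \<tau>))) / \<tau> - a) has_field_derivative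
           - z0 * (z0 + a) / (1 + y0)) (at \<tau>0)"
proof -
  define H' where "H' = - (b * exp (a * \<tau>0) * (1 + a * \<tau>0))"
  define g' where "g' = inverse ((1 + y0) * exp y0)"
  have "((\<lambda>\<tau>. - (b * \<tau> * exp (a * \<tau>))) has_field_derivative H') (at \<tau>0)"
    unfolding H'_def by (auto intro!: derivative_eq_intros simp: algebra_simps)
  from DERIV_chain2[OF dg[unfolded y0] this]
  have "((\<lambda>\<tau>. g (- (b * \<tau> * exp (a * \<tau>)))) has_field_derivative g' * H') (at \<tau>0)"
    by (simp add: g'_def)
  then have "((\<lambda>\<tau>. g (- (b * \<tau> * exp (a * \<tau>))) / \<tau> - a) has_field_derivative
      (g' * H' * \<tau>0 - g (- (b * \<tau>0 * exp (a * \<tau>0))) * 1) / (\<tau>0 * \<tau>0) - 0) (at \<tau>0)"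
    using \<open>\<tau>0 \<noteq> 0\<close> by (intro DERIV_diff DERIV_divide DERIV_ident DERIV_const)
  moreover have "(g' * H' * \<tau>0 - g (- (b * \<tau>0 * exp (a * \<tau>0))) * 1) / (\<tau>0 * \<tau>0) - 0
      = - z0 * (z0 + a) / (1 + y0)"
  proof -
    have "H' * \<tau>0 = y0 * exp y0 * (1 + a * \<tau>0)"
      by (simp add: y0 H'_def mult_ac)
    then have "g' * H' * \<tau>0 = inverse ((1 + y0) * exp y0) * (y0 * exp y0 * (1 + a * \<tau>0))"
      by (simp add: g'_def mult.assoc)
    also have "\<dots> = y0 * (1 + a * \<tau>0) / (1 + y0)"
      by (simp add: divide_inverse mult_ac)
    finally have "g' * H' * \<tau>0 - y0 = (y0 * (1 + a * \<tau>0) - y0 * (1 + y0)) / (1 + y0)"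
      using \<open>1 + y0 \<noteq> 0\<close> by (simp add: diff_divide_distrib)
    also have "\<dots> = - z0 * y0 * \<tau>0 / (1 + y0)"
      by (simp add: y0_def algebra_simps)
    finally show ?thesis
      using \<open>\<tau>0 \<noteq> 0\<close> gy0 unfolding y0 by (simp add: y0_def)
  qed
  ultimately show ?thesis by simp
qed

lemma delay_char_root_branch:
  fixes a b z0 :: complex and \<tau>0 :: real
  assumes "0 < \<tau>0" and root: "z0 + a + b * exp (- z0 * of_real \<tau>0) = 0"
    and nondeg: "1 + (z0 + a) * of_real \<tau>0 \<noteq> 0"
  obtains L e where "0 < e" "L \<tau>0 = z0"
    "\<And>\<tau>. \<bar>\<tau> - \<tau>0\<bar> < e \<Longrightarrow> L \<tau> + a + b * exp (- L \<tau> * of_real \<tau>) = 0"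
    "(L has_vector_derivative - z0 * (z0 + a) / (1 + (z0 + a) * of_real \<tau>0)) (at \<tau>0)"
proof -
  define f where "f = (\<lambda>y::complex. y * exp y)"
  define H where "H = (\<lambda>u::complex. - (b * u * exp (a * u)))"
  define y0 where "y0 = (z0 + a) * of_real \<tau>0"
  have fy0: "f y0 = H (of_real \<tau>0)"
    using root delay_char_eq_zero_iff_Lambert_form[of "of_real \<tau>0" z0 a b] \<open>0 < \<tau>0\<close>
    by (simp add: f_def H_def y0_def)
  have dfy0: "deriv f y0 = (1 + y0) * exp y0"
    unfolding f_def by (rule DERIV_imp_deriv) (auto intro!: derivative_eq_intros simp: algebra_simps)
  have "1 + y0 \<noteq> 0" using nondeg by (simp add: y0_def)
  then have df_nz: "deriv f y0 \<noteq> 0" by (simp add: dfy0)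
  have hol: "f holomorphic_on UNIV" unfolding f_def by (intro holomorphic_intros)
  obtain V g where V: "open V" "f y0 \<in> V" and gy0: "g (f y0) = y0"
      and fg: "\<And>v. v \<in> V \<Longrightarrow> f (g v) = v"
      and dg: "(g has_field_derivative inverse (deriv f y0)) (at (f y0))"
    using holomorphic_local_inverse[OF hol open_UNIV UNIV_I df_nz] by metis
  have "open (H -` V)"
    using V(1) unfolding H_def by (intro continuous_open_vimage) (auto intro!: continuous_intros)
  then obtain e0 where "0 < e0" and e0: "ball (of_real \<tau>0) e0 \<subseteq> H -` V"
    using V(2) unfolding fy0 by (meson openE vimageI2)
  define L where "L = (\<lambda>\<tau>::real. g (H (of_real \<tau>)) / of_real \<tau> - a)"
  show ?thesis
  proof
    show "0 < min e0 \<tau>0" using \<open>0 < e0\<close> \<open>0 < \<tau>0\<close> by simp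
    show "L \<tau>0 = z0"
      using gy0 \<open>0 < \<tau>0\<close> by (simp add: L_def fy0[symmetric] y0_def)
  next
    fix \<tau> assume near: "\<bar>\<tau> - \<tau>0\<bar> < min e0 \<tau>0"
    then have "0 < \<tau>" by linarith
    have "dist (of_real \<tau>0) (of_real \<tau> :: complex) < e0"
      using near by (simp add: dist_norm abs_minus_commute flip: of_real_diff)
    then have "f (g (H (of_real \<tau>))) = H (of_real \<tau>)"
      using e0 fg unfolding mem_ball[symmetric] by blast
    moreover have "(L \<tau> + a) * of_real \<tau> = g (H (of_real \<tau>))"
      using \<open>0 < \<tau>\<close> by (simp add: L_def)
    ultimately show "L \<tau> + a + b * exp (- L \<tau> * of_real \<tau>) = 0"
      using delay_char_eq_zero_iff_Lambert_form[of "of_real \<tau>" "L \<tau>" a b] \<open>0 < \<tau>\<close>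
      by (simp add: f_def H_def)
  next
    have "((\<lambda>u. g (H u) / u - a) has_field_derivative
        - z0 * (z0 + a) / (1 + (z0 + a) * of_real \<tau>0)) (at (of_real \<tau>0))"
      using Lambert_branch_has_derivative[of "of_real \<tau>0" z0 a b g] \<open>0 < \<tau>0\<close> \<open>1 + y0 \<noteq> 0\<close>
        fy0 gy0 dg dfy0
      by (simp add: f_def H_def y0_def)
    then show "(L has_vector_derivative - z0 * (z0 + a) / (1 + (z0 + a) * of_real \<tau>0)) (at \<tau>0)"
      unfolding L_def
      using field_vector_diff_chain_at[OF has_vector_derivative_of_real[OF DERIV_ident]]
      by (simp add: o_def)
  qed
qed

lemma Re_crossing_speed_pos:
  fixes w a \<tau> :: real
  assumes "0 < w" "0 < \<tau>"
  shows "0 < Re (- (\<i> * of_real w) * (\<i> * of_real w + of_real a)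
                 / (1 + (\<i> * of_real w + of_real a) * of_real \<tau>))"
proof -
  have "Re (- (\<i> * of_real w) * (\<i> * of_real w + of_real a)
              / (1 + (\<i> * of_real w + of_real a) * of_real \<tau>))
      = w\<^sup>2 / ((1 + a * \<tau>)\<^sup>2 + (w * \<tau>)\<^sup>2)"
    unfolding Re_divide by (simp add: algebra_simps power2_eq_square)
  also have "0 < \<dots>" using assms by (simp add: add_nonneg_pos)
  finally show ?thesis .
qed

lemma asympt_stable_if_delayed_share_le_half:
  assumes "0 < \<delta> * \<gamma>" "0 \<le> p" "p \<le> 1/2" "0 \<le> \<tau>"
  shows "asympt_stable \<delta> \<gamma> p \<tau>"
  unfolding asympt_stable_def
proof (intro allI impI)
  fix z assume "char_fun \<delta> \<gamma> p \<tau> z = 0"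
  then show "Re z < 0"
    using delay_char_root_Re_neg[of "p * \<delta> * \<gamma>" "(1 - p) * \<delta> * \<gamma>" \<tau> z] assms
    by (simp add: char_fun_def mult.assoc mult_right_mono)
qed

lemma hopf_bifurcation_if_delayed_share_gt_half:
  assumes "0 < \<delta> * \<gamma>" "1/2 < p" "p \<le> 1"
  shows "hopf_bifurcation_at \<delta> \<gamma> p (arccos (- (1 - p) / p) / (\<delta> * \<gamma> * sqrt (2 * p - 1)))"
proof -
  define \<kappa> where "\<kappa> = \<delta> * \<gamma>"
  define a where "a = (1 - p) * \<kappa>"
  define b where "b = p * \<kappa>"
  have "0 < \<kappa>" using assms(1) by (simp add: \<kappa>_def)
  have char: "char_fun \<delta> \<gamma> p \<tau> z = z + of_real a + of_real b * exp (- z * of_real \<tau>)" for \<tau> z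
    by (simp add: char_fun_def a_def b_def \<kappa>_def mult.assoc)
  have "0 \<le> a" using assms \<open>0 < \<kappa>\<close> by (simp add: a_def)
  have "\<bar>a\<bar> < b"
    using assms \<open>0 \<le> a\<close> \<open>0 < \<kappa>\<close> by (simp add: a_def b_def)
  have "b\<^sup>2 - a\<^sup>2 = \<kappa>\<^sup>2 * (2 * p - 1)"
    by (simp add: a_def b_def power2_eq_square algebra_simps)
  then have "sqrt (b\<^sup>2 - a\<^sup>2) = \<delta> * \<gamma> * sqrt (2 * p - 1)"
    using \<open>0 < \<kappa>\<close> by (simp add: real_sqrt_mult \<kappa>_def)
  moreover have "- a / b = - (1 - p) / p"
    using \<open>0 < \<kappa>\<close> by (simp add: a_def b_def minus_divide_left)
  ultimately obtain w \<tau> where "0 < w" "0 < \<tau>"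
    and \<tau>: "\<tau> = arccos (- (1 - p) / p) / (\<delta> * \<gamma> * sqrt (2 * p - 1))"
    and roots: "char_fun \<delta> \<gamma> p \<tau> (\<i> * of_real w) = 0" "char_fun \<delta> \<gamma> p \<tau> (- \<i> * of_real w) = 0"
    using imaginary_delay_char_roots[OF \<open>\<bar>a\<bar> < b\<close>] unfolding char by metis
  have "1 + (\<i> * of_real w + of_real a) * of_real \<tau> \<noteq> 0"
    using \<open>0 < w\<close> \<open>0 < \<tau>\<close> by (auto simp: complex_eq_iff)
  then obtain L e where "0 < e" "L \<tau> = \<i> * of_real w"
      "\<And>\<tau>'. \<bar>\<tau>' - \<tau>\<bar> < e \<Longrightarrow> char_fun \<delta> \<gamma> p \<tau>' (L \<tau>') = 0"
      "(L has_vector_derivative - (\<i> * of_real w) * (\<i> * of_real w + of_real a)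
          / (1 + (\<i> * of_real w + of_real a) * of_real \<tau>)) (at \<tau>)"
    using delay_char_root_branch[OF \<open>0 < \<tau>\<close>, of "\<i> * of_real w" "of_real a" "of_real b"] roots(1)
    unfolding char by metis
  then show ?thesis
    unfolding hopf_bifurcation_at_def \<tau>[symmetric]
    using \<open>0 < w\<close> roots Re_crossing_speed_pos[OF \<open>0 < w\<close> \<open>0 < \<tau>\<close>] by blast
qed

theorem proposition4:
  fixes a b c d p :: real
  defines "\<delta>1 \<equiv> b - d"
      and "\<delta>2 \<equiv> c - a"
  defines "\<delta> \<equiv> \<delta>1 + \<delta>2"
  defines "s \<equiv> \<delta>1 / \<delta>"
  defines "\<gamma> \<equiv> s * (1 - s)"
  assumes "\<delta>1 > 0" and "\<delta>2 > 0" and "0 \<le> p" and "p \<le> 1"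
  shows "(p \<le> 1/2 \<longrightarrow> (\<forall>\<tau> \<ge> 0. asympt_stable \<delta> \<gamma> p \<tau>)) \<and>
         (p > 1/2 \<longrightarrow> hopf_bifurcation_at \<delta> \<gamma> p
             (arccos (- (1 - p) / p) / (\<delta> * \<gamma> * sqrt (2 * p - 1))))"
proof -
  have "0 < \<delta>" using assms(6,7) by (simp add: \<delta>_def)
  moreover have "0 < s" "s < 1" using assms(6,7) by (simp_all add: s_def \<delta>_def field_simps)
  ultimately have "0 < \<delta> * \<gamma>" by (simp add: \<gamma>_def)
  then show ?thesis
    using asympt_stable_if_delayed_share_le_half hopf_bifurcation_if_delayed_share_gt_half assms(8,9)
    by auto
qed

end
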